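(* Let $(W,S)$ be a Coxeter system with $S$ finite, $\Gamma$ a totally ordered abelian group, $\varphi:W\to\Gamma$ a weight function, $p$ a prime and $G$ a finite $p$-group of automorphisms of $W$ with $\sigma(S)=S$ and $\varphi\circ\sigma=\varphi$ for all $\sigma\in G$. Then $(\mathrm{br}_G(T_w))_{w\in W^G}$ is an $\mathbb{F}_p[\Gamma]$-basis of the $\mathbb{F}_p[\Gamma]$-algebra $\mathrm{Br}_G(\mathcal{H})$.
   Context: A weight function satisfies $\varphi(ww')=\varphi(w)+\varphi(w')$ whenever $\ell(ww')=\ell(w)+\ell(w')$. $A=\mathbb{Z}[\Gamma]=\bigoplus_\gamma\mathbb{Z}e^\gamma$. $\mathcal{H}$ is the Hecke algebra over $A$: free $A$-module with basis $(T_w)_{w\in W}$, with $T_wT_{w'}=T_{ww'}$ if $\ell(ww')=\ell(w)+\ell(w')$ and $(T_s-e^{\varphi(s)})(T_s+e^{-\varphi(s)})=0$ for $s\in S$. $G$ acts on $\mathcal{H}$ by $A$-algebra automorphisms via $\sigma(T_w)=T_{\sigma(w)}$. Brauer quotient: for an $RG$-module $M$ and $H\le G$, $\mathrm{Tr}_H^G:M^H\to M^G$, $m\mapsto\sum_{\sigma\in[G/H]}\sigma(m)$ ($[G/H]$ a set of coset representatives); $\mathrm{Tr}(M)=\sum_{H<G}\mathrm{Tr}_H^G(M^H)$ (sum over proper subgroups); $\mathrm{Br}_G(M)=M^G/\mathrm{Tr}(M)$ with canonical map $\mathrm{br}_G:M^G\to\mathrm{Br}_G(M)$. For $M=\mathcal{H}$,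 $\mathrm{Tr}(\mathcal{H})$ is a two-sided ideal of $\mathcal{H}^G$ containing $p\mathcal{H}^G$, so $\mathrm{Br}_G(\mathcal{H})$ is an $\mathbb{F}_p[\Gamma]$-algebra. *)

theory Defs
  imports "HOL-Algebra.Algebra"
begin

fun word_eval :: "('w, 'b) monoid_scheme \<Rightarrow> 'w list \<Rightarrow> 'w" where
  "word_eval W [] = \<one>\<^bsub>W\<^esub>"
| "word_eval W (s # ws) = s \<otimes>\<^bsub>W\<^esub> word_eval W ws"

text \<open>Coxeter relators: s s and (s t)^(m(s,t)) with m(s,t) the order of s t
  (order 0 = infinite order, giving the trivial relator).\<close>
definition coxeter_relators :: "('w, 'b) monoid_scheme \<Rightarrow> 'w set \<Rightarrow> 'w list set" where
  "coxeter_relators W S =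
     {[s, s] | s. s \<in> S} \<union>
     {concat (replicate (group.ord W (s \<otimes>\<^bsub>W\<^esub> t)) [s, t]) | s t. s \<in> S \<and> t \<in> S}"

inductive coxeter_equiv :: "('w, 'b) monoid_scheme \<Rightarrow> 'w set \<Rightarrow> 'w list \<Rightarrow> 'w list \<Rightarrow> bool"
  for W S where
  refl: "coxeter_equiv W S u u"
| sym: "coxeter_equiv W S u v \<Longrightarrow> coxeter_equiv W S v u"
| trans: "coxeter_equiv W S u v \<Longrightarrow> coxeter_equiv W S v x \<Longrightarrow> coxeter_equiv W S u x"
| rel: "r \<in> coxeter_relators W S \<Longrightarrow> coxeter_equiv W S (u @ r @ v) (u @ v)"

text \<open>(W,S) is a Coxeter system: S is a generating set of involutions and
  W has the presentation < S | s^2, (st)^(m(s,t)) >, i.e. every word in S that is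
  trivial in W is trivial in the presented group.\<close>
definition coxeter_system :: "('w, 'b) monoid_scheme \<Rightarrow> 'w set \<Rightarrow> bool" where
  "coxeter_system W S \<longleftrightarrow>
     group W \<and> S \<subseteq> carrier W \<and> \<one>\<^bsub>W\<^esub> \<notin> S \<and>
     (\<forall>s\<in>S. s \<otimes>\<^bsub>W\<^esub> s = \<one>\<^bsub>W\<^esub>) \<and>
     generate W S = carrier W \<and>
     (\<forall>ws. set ws \<subseteq> S \<and> word_eval W ws = \<one>\<^bsub>W\<^esub> \<longrightarrow> coxeter_equiv W S ws [])"

definition coxeter_length :: "('w, 'b) monoid_scheme \<Rightarrow> 'w set \<Rightarrow> 'w \<Rightarrow> nat" where
  "coxeter_length W S w = (LEAST n. \<exists>ws. set ws \<subseteq> S \<and> length ws = n \<and> word_eval W ws = w)"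

definition weight_function ::
  "('w, 'b) monoid_scheme \<Rightarrow> 'w set \<Rightarrow> ('w \<Rightarrow> 'g::ab_group_add) \<Rightarrow> bool" where
  "weight_function W S \<phi> \<longleftrightarrow>
     (\<forall>w\<in>carrier W. \<forall>w'\<in>carrier W.
        coxeter_length W S (w \<otimes>\<^bsub>W\<^esub> w') = coxeter_length W S w + coxeter_length W S w'
        \<longrightarrow> \<phi> (w \<otimes>\<^bsub>W\<^esub> w') = \<phi> w + \<phi> w')"

text \<open>Elements of A = Z[Gamma]: finitely supported functions Gamma -> Z
  (a corresponds to sum a(gamma) e^gamma).\<close>
definition group_ring_elems :: "('g \<Rightarrow> int) set" where
  "group_ring_elems = {a. finite {\<gamma>. a \<gamma> \<noteq> 0}}"

text \<open>Elements of H: h corresponds to sum_w (sum_gamma h w gamma e^gamma) T_w.\<close>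
definition hecke_elems :: "('w, 'b) monoid_scheme \<Rightarrow> ('w \<Rightarrow> 'g \<Rightarrow> int) set" where
  "hecke_elems W = {h. finite {(w, \<gamma>). h w \<gamma> \<noteq> 0} \<and> (\<forall>w. w \<notin> carrier W \<longrightarrow> h w = (\<lambda>\<gamma>. 0))}"

definition hecke_T :: "'w \<Rightarrow> 'w \<Rightarrow> 'g::zero \<Rightarrow> int" where
  "hecke_T w = (\<lambda>v \<gamma>. if v = w \<and> \<gamma> = 0 then 1 else 0)"

definition hecke_scal :: "('g::ab_group_add \<Rightarrow> int) \<Rightarrow> ('w \<Rightarrow> 'g \<Rightarrow> int) \<Rightarrow> 'w \<Rightarrow> 'g \<Rightarrow> int" where
  "hecke_scal a h = (\<lambda>v \<gamma>. \<Sum>\<delta>\<in>{\<delta>. a \<delta> \<noteq> 0}. a \<delta> * h v (\<gamma> - \<delta>))"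

text \<open>Action of an automorphism sigma of W on H: the A-linear map with
  sigma(T_w) = T_(sigma w).\<close>
definition hecke_act :: "('w, 'b) monoid_scheme \<Rightarrow> ('w \<Rightarrow> 'w) \<Rightarrow> ('w \<Rightarrow> 'g \<Rightarrow> int) \<Rightarrow> 'w \<Rightarrow> 'g \<Rightarrow> int" where
  "hecke_act W \<sigma> h = (\<lambda>v. if v \<in> carrier W then h (inv_into (carrier W) \<sigma> v) else (\<lambda>\<gamma>. 0))"

definition hecke_fixed :: "('w, 'b) monoid_scheme \<Rightarrow> ('w \<Rightarrow> 'w) set \<Rightarrow> ('w \<Rightarrow> 'g \<Rightarrow> int) set" where
  "hecke_fixed W K = {h \<in> hecke_elems W. \<forall>\<sigma>\<in>K. hecke_act W \<sigma> h = h}"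

definition left_coset_reps :: "('w, 'b) monoid_scheme \<Rightarrow> ('w \<Rightarrow> 'w) set \<Rightarrow> ('w \<Rightarrow> 'w) set \<Rightarrow> ('w \<Rightarrow> 'w) set set" where
  "left_coset_reps W G K =
     {R. R \<subseteq> G \<and> (\<forall>\<tau>\<in>G. \<exists>!\<sigma>. \<sigma> \<in> R \<and> \<tau> \<in> \<sigma> <#\<^bsub>AutoGroup W\<^esub> K)}"

definition rel_trace :: "('w, 'b) monoid_scheme \<Rightarrow> ('w \<Rightarrow> 'w) set \<Rightarrow> ('w \<Rightarrow> 'w) set \<Rightarrow> ('w \<Rightarrow> 'g \<Rightarrow> int) \<Rightarrow> 'w \<Rightarrow> 'g \<Rightarrow> int" where
  "rel_trace W G K h =
     (\<lambda>v \<gamma>. \<Sum>\<sigma>\<in>(SOME R. R \<in> left_coset_reps W G K). hecke_act W \<sigma> h v \<gamma>)"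

definition proper_subgroups :: "('w, 'b) monoid_scheme \<Rightarrow> ('w \<Rightarrow> 'w) set \<Rightarrow> ('w \<Rightarrow> 'w) set set" where
  "proper_subgroups W G = {K. subgroup K (AutoGroup W) \<and> K \<subset> G}"

definition trace_ideal :: "('w, 'b) monoid_scheme \<Rightarrow> ('w \<Rightarrow> 'w) set \<Rightarrow> ('w \<Rightarrow> 'g \<Rightarrow> int) set" where
  "trace_ideal W G =
     {x. \<exists>hs. (\<forall>K\<in>proper_subgroups W G. hs K \<in> hecke_fixed W K) \<and>
            x = (\<lambda>v \<gamma>. \<Sum>K\<in>proper_subgroups W G. rel_trace W G K (hs K) v \<gamma>)}"

definition fixed_elems :: "('w, 'b) monoid_scheme \<Rightarrow> ('w \<Rightarrow> 'w) set \<Rightarrow> 'w set" where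
  "fixed_elems W G = {w \<in> carrier W. \<forall>\<sigma>\<in>G. \<sigma> w = w}"

definition hecke_comb :: "'w set \<Rightarrow> ('w \<Rightarrow> 'g::ab_group_add \<Rightarrow> int) \<Rightarrow> 'w \<Rightarrow> 'g \<Rightarrow> int" where
  "hecke_comb F a = (\<lambda>v \<gamma>. \<Sum>w\<in>F. hecke_scal (a w) (hecke_T w) v \<gamma>)"

text \<open>(br_G(T_w))_{w in W^G} is an F_p[Gamma]-basis of Br_G(H) = H^G / Tr(H),
  where F_p[Gamma] = A / pA acts through A (p H^G is contained in Tr(H)):
  (1) spanning: every x in H^G is congruent mod Tr(H) to an A-combination of
      the T_w, w in W^G;
  (2) linear independence over F_p[Gamma]: if an A-combination of the T_w
      (w in W^G, distinct) lies in Tr(H), all coefficients lie in pA.\<close>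
definition brauer_basis :: "nat \<Rightarrow> ('w, 'b) monoid_scheme \<Rightarrow> ('w \<Rightarrow> 'w) set \<Rightarrow> 'g::ab_group_add itself \<Rightarrow> bool" where
  "brauer_basis p W G (_ :: 'g itself) \<longleftrightarrow>
     (\<forall>x \<in> (hecke_fixed W G :: ('w \<Rightarrow> 'g \<Rightarrow> int) set).
        \<exists>F a. finite F \<and> F \<subseteq> fixed_elems W G \<and> (\<forall>w\<in>F. a w \<in> group_ring_elems) \<and>
              (\<lambda>v \<gamma>. x v \<gamma> - hecke_comb F a v \<gamma>) \<in> trace_ideal W G) \<and>
     (\<forall>F (a :: 'w \<Rightarrow> 'g \<Rightarrow> int). finite F \<and> F \<subseteq> fixed_elems W G \<and>
        (\<forall>w\<in>F. a w \<in> group_ring_elems) \<and> hecke_comb F a \<in> trace_ideal W G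
        \<longrightarrow> (\<forall>w\<in>F. \<forall>\<gamma>. int p dvd a w \<gamma>))"

end

theory Submission
  imports Defs
begin

text \<open>The action of \<open>G\<close> permutes the basis \<open>e\<^sup>\<gamma> T\<^sub>w\<close> of \<open>H\<close> over \<open>\<int>\<close>. If \<open>w\<close> is not fixed by \<open>G\<close>,
  the orbit sum of \<open>e\<^sup>\<gamma> T\<^sub>w\<close> is \<open>Tr\<^sub>K\<^sup>G(e\<^sup>\<gamma> T\<^sub>w)\<close> for the proper stabiliser \<open>K\<close> of \<open>w\<close>; subtracting such
  orbit sums shows that every \<open>G\<close>-invariant element supported off \<open>W\<^sup>G\<close> lies in \<open>Tr(H)\<close>, so the
  \<open>T\<^sub>w\<close> with \<open>w \<in> W\<^sup>G\<close> span \<open>Br\<^sub>G(H)\<close>. Conversely, at a fixed point \<open>w\<close> the coefficient of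
  \<open>Tr\<^sub>K\<^sup>G(h)\<close> is \<open>[G:K]\<close> times that of \<open>h\<close>, which is divisible by \<open>p\<close> for \<open>K < G\<close> as \<open>G\<close> is a
  \<open>p\<close>-group; this gives linear independence over \<open>\<bbbF>\<^sub>p[\<Gamma>]\<close>. Only the \<open>A\<close>-module structure
  of \<open>H\<close> enters.\<close>

lemma (in group) l_coset_subset_subgroup:
  assumes "subgroup H G" "K \<subseteq> H" "x \<in> H"
  shows "x <# K \<subseteq> H"
  using assms subgroup.m_closed[OF assms(1)] unfolding l_coset_def by blast

lemma (in group) left_coset_reps_exist:
  assumes H: "subgroup H G" and K: "subgroup K G" and KH: "K \<subseteq> H"
  shows "\<exists>R. R \<subseteq> H \<and> (\<forall>\<tau>\<in>H. \<exists>!\<sigma>. \<sigma> \<in> R \<and> \<tau> \<in> \<sigma> <# K)"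
proof -
  define rep where "rep C = (SOME \<sigma>. \<sigma> \<in> C)" for C :: "'a set"
  have carr: "\<And>x. x \<in> H \<Longrightarrow> x \<in> carrier G" by (rule subgroup.mem_carrier[OF H])
  have self: "\<And>x. x \<in> H \<Longrightarrow> x \<in> x <# K" by (rule lcos_self[OF carr K])
  have rep: "\<And>x. x \<in> H \<Longrightarrow> rep (x <# K) \<in> x <# K"
    unfolding rep_def by (rule someI, rule self)
  have same: "\<And>x y. x \<in> H \<Longrightarrow> y \<in> x <# K \<Longrightarrow> y <# K = x <# K"
    by (rule HOL.sym, rule l_repr_independence[OF _ carr K])
  define R where "R = (\<lambda>x. rep (x <# K)) ` H"
  have RH: "R \<subseteq> H"
    unfolding R_def using rep l_coset_subset_subgroup[OF H KH] by (meson image_subsetI subsetD)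
  moreover have "\<exists>!\<sigma>. \<sigma> \<in> R \<and> \<tau> \<in> \<sigma> <# K" if \<tau>: "\<tau> \<in> H" for \<tau>
  proof (rule ex1I)
    show "rep (\<tau> <# K) \<in> R \<and> \<tau> \<in> rep (\<tau> <# K) <# K"
      using \<tau> self[OF \<tau>] same[OF \<tau> rep[OF \<tau>]] unfolding R_def by simp
  next
    fix \<sigma> assume \<sigma>: "\<sigma> \<in> R \<and> \<tau> \<in> \<sigma> <# K"
    then obtain x where x: "x \<in> H" "\<sigma> = rep (x <# K)" unfolding R_def by auto
    have "\<sigma> <# K = x <# K" unfolding x(2) by (rule same[OF x(1) rep[OF x(1)]])
    moreover have "\<tau> <# K = \<sigma> <# K" using \<sigma> RH by (intro same) auto
    ultimately show "\<sigma> = rep (\<tau> <# K)" using x by simp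
  qed
  ultimately show ?thesis by (intro exI[of _ R] conjI ballI)
qed

lemma (in group) card_eq_card_left_coset_reps_mult:
  assumes H: "subgroup H G" and K: "subgroup K G" and KH: "K \<subseteq> H" and fin: "finite H"
    and R: "R \<subseteq> H" "\<forall>\<tau>\<in>H. \<exists>!\<sigma>. \<sigma> \<in> R \<and> \<tau> \<in> \<sigma> <# K"
  shows "card H = card R * card K"
proof -
  have cosets_H: "\<And>\<sigma>. \<sigma> \<in> R \<Longrightarrow> \<sigma> <# K \<subseteq> H"
    using l_coset_subset_subgroup[OF H KH] R(1) by blast
  have H_Union: "H = (\<Union>\<sigma>\<in>R. \<sigma> <# K)"
  proof
    show "H \<subseteq> (\<Union>\<sigma>\<in>R. \<sigma> <# K)" using R(2) by (meson UN_iff subsetI)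
  qed (use cosets_H in blast)
  have disjoint: "(i <# K) \<inter> (j <# K) = {}" if "i \<in> R" "j \<in> R" "i \<noteq> j" for i j
  proof -
    have "\<tau> \<notin> j <# K" if \<tau>: "\<tau> \<in> i <# K" for \<tau>
    proof
      assume "\<tau> \<in> j <# K"
      have "\<tau> \<in> H" using cosets_H[OF \<open>i \<in> R\<close>] \<tau> by blast
      then obtain \<sigma> where "\<forall>\<sigma>'. \<sigma>' \<in> R \<and> \<tau> \<in> \<sigma>' <# K \<longrightarrow> \<sigma>' = \<sigma>"
        using R(2) by (meson ex1E)
      then have "i = \<sigma>" "j = \<sigma>" using \<tau> \<open>\<tau> \<in> j <# K\<close> \<open>i \<in> R\<close> \<open>j \<in> R\<close> by auto
      then show False using \<open>i \<noteq> j\<close> by simp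
    qed
    then show ?thesis by blast
  qed
  have card_coset: "card (\<sigma> <# K) = card K" if "\<sigma> \<in> R" for \<sigma>
  proof -
    have \<sigma>: "\<sigma> \<in> carrier G" using that R(1) subgroup.mem_carrier[OF H] by blast
    have "\<sigma> <# K = (\<lambda>k. \<sigma> \<otimes> k) ` K" unfolding l_coset_def by auto
    moreover have "inj_on (\<lambda>k. \<sigma> \<otimes> k) K" by (rule inj_on_g'[OF subgroup.subset[OF K] \<sigma>])
    ultimately show ?thesis by (simp add: card_image)
  qed
  have finR: "finite R" using R(1) fin by (rule finite_subset)
  have "card H = (\<Sum>\<sigma>\<in>R. card (\<sigma> <# K))"
    by (subst H_Union, rule card_UN_disjoint[OF finR])
       (use cosets_H fin disjoint in \<open>auto intro: finite_subset\<close>)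
  also have "\<dots> = card R * card K" using card_coset by simp
  finally show ?thesis .
qed

lemma AutoGroup_bij_betw: "\<sigma> \<in> carrier (AutoGroup W) \<Longrightarrow> bij_betw \<sigma> (carrier W) (carrier W)"
  by (simp add: AutoGroup_def auto_def Bij_def)

lemma AutoGroup_mult_apply:
  "\<lbrakk>\<sigma> \<in> carrier (AutoGroup W); \<tau> \<in> carrier (AutoGroup W); w \<in> carrier W\<rbrakk>
   \<Longrightarrow> (\<sigma> \<otimes>\<^bsub>AutoGroup W\<^esub> \<tau>) w = \<sigma> (\<tau> w)"
  by (simp add: AutoGroup_def BijGroup_def auto_def compose_def)

lemma AutoGroup_one_apply: "w \<in> carrier W \<Longrightarrow> \<one>\<^bsub>AutoGroup W\<^esub> w = w"
  by (simp add: AutoGroup_def BijGroup_def)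

lemma AutoGroup_inv_apply:
  assumes "group W" "\<sigma> \<in> carrier (AutoGroup W)" "w \<in> carrier W"
  shows "(inv\<^bsub>AutoGroup W\<^esub> \<sigma>) (\<sigma> w) = w"
proof -
  interpret Aut: group "AutoGroup W" using assms(1) by (rule group.AutoGroup)
  have "(inv\<^bsub>AutoGroup W\<^esub> \<sigma>) (\<sigma> w) = (inv\<^bsub>AutoGroup W\<^esub> \<sigma> \<otimes>\<^bsub>AutoGroup W\<^esub> \<sigma>) w"
    by (rule HOL.sym, rule AutoGroup_mult_apply[OF Aut.inv_closed[OF assms(2)] assms(2,3)])
  also have "\<dots> = w" using assms by (simp add: AutoGroup_one_apply)
  finally show ?thesis .
qed

lemma hecke_act_apply:
  assumes "\<sigma> \<in> carrier (AutoGroup W)" "u \<in> carrier W"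
  shows "hecke_act W \<sigma> h (\<sigma> u) = h u"
  using bij_betw_inv_into_left[OF AutoGroup_bij_betw[OF assms(1)] assms(2)]
    bij_betwE[OF AutoGroup_bij_betw[OF assms(1)]] assms(2)
  by (simp add: hecke_act_def)

lemma hecke_act_fixed_iff:
  assumes h: "h \<in> hecke_elems W" and \<sigma>: "\<sigma> \<in> carrier (AutoGroup W)"
  shows "hecke_act W \<sigma> h = h \<longleftrightarrow> (\<forall>u\<in>carrier W. h (\<sigma> u) = h u)"
proof
  assume fixed: "hecke_act W \<sigma> h = h"
  show "\<forall>u\<in>carrier W. h (\<sigma> u) = h u"
  proof
    fix u assume "u \<in> carrier W"
    then show "h (\<sigma> u) = h u" using hecke_act_apply[OF \<sigma>, of u h] fixed by simp
  qed
next
  assume inv: "\<forall>u\<in>carrier W. h (\<sigma> u) = h u"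
  have "hecke_act W \<sigma> h v = h v" for v
  proof (cases "v \<in> carrier W")
    case True
    define u where "u = inv_into (carrier W) \<sigma> v"
    have "u \<in> carrier W" "v = \<sigma> u"
      unfolding u_def using AutoGroup_bij_betw[OF \<sigma>] True
      by (simp_all add: bij_betwE[OF bij_betw_inv_into] bij_betw_inv_into_right)
    then show ?thesis using inv hecke_act_apply[OF \<sigma>] by simp
  next
    case False
    then show ?thesis using h by (simp add: hecke_act_def hecke_elems_def)
  qed
  then show "hecke_act W \<sigma> h = h" ..
qed

lemma hecke_fixed_apply:
  assumes "y \<in> hecke_fixed W K" "\<sigma> \<in> K" "\<sigma> \<in> carrier (AutoGroup W)" "u \<in> carrier W"
  shows "y (\<sigma> u) = y u"
  using assms hecke_act_fixed_iff[OF _ assms(3)] by (auto simp: hecke_fixed_def)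

lemma hecke_act_combine:
  assumes "F 0 0 = 0"
  shows "hecke_act W \<sigma> (\<lambda>v \<gamma>. F (f v \<gamma>) (g v \<gamma>))
       = (\<lambda>v \<gamma>. F (hecke_act W \<sigma> f v \<gamma>) (hecke_act W \<sigma> g v \<gamma>))"
  using assms by (simp add: hecke_act_def fun_eq_iff)

lemma hecke_fixed_combine:
  assumes F: "F 0 0 = 0" and f: "f \<in> hecke_fixed W K" and g: "g \<in> hecke_fixed W K"
  shows "(\<lambda>v \<gamma>. F (f v \<gamma>) (g v \<gamma>)) \<in> hecke_fixed W K"
proof -
  have supp: "{(v, \<gamma>). F (f v \<gamma>) (g v \<gamma>) \<noteq> 0} \<subseteq> {(v, \<gamma>). f v \<gamma> \<noteq> 0} \<union> {(v, \<gamma>). g v \<gamma> \<noteq> 0}"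
    using F by auto
  have "finite {(v, \<gamma>). f v \<gamma> \<noteq> 0}" "finite {(v, \<gamma>). g v \<gamma> \<noteq> 0}"
    using f g by (simp_all add: hecke_fixed_def hecke_elems_def)
  then have "finite {(v, \<gamma>). F (f v \<gamma>) (g v \<gamma>) \<noteq> 0}"
    by (rule finite_subset[OF supp finite_UnI])
  moreover have "\<forall>v. v \<notin> carrier W \<longrightarrow> (\<lambda>\<gamma>. F (f v \<gamma>) (g v \<gamma>)) = (\<lambda>\<gamma>. 0)"
    using f g F by (simp add: hecke_fixed_def hecke_elems_def)
  moreover have "\<forall>\<sigma>\<in>K. hecke_act W \<sigma> (\<lambda>v \<gamma>. F (f v \<gamma>) (g v \<gamma>)) = (\<lambda>v \<gamma>. F (f v \<gamma>) (g v \<gamma>))"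
    using f g by (simp add: hecke_act_combine[where F=F, OF F] hecke_fixed_def)
  ultimately show ?thesis by (simp add: hecke_fixed_def hecke_elems_def)
qed

lemma zero_in_hecke_fixed: "(\<lambda>v \<gamma>. 0) \<in> hecke_fixed W K"
  by (simp add: hecke_fixed_def hecke_elems_def hecke_act_def fun_eq_iff)

lemma hecke_comb_apply:
  assumes "finite F" "\<forall>w\<in>F. a w \<in> group_ring_elems"
  shows "hecke_comb F a v \<gamma> = (if v \<in> F then a v \<gamma> else 0)"
proof -
  have scal_T: "hecke_scal (a w) (hecke_T w) v \<gamma> = (if v = w then a w \<gamma> else 0)" if "w \<in> F" for w
  proof -
    have "hecke_scal (a w) (hecke_T w) v \<gamma>
        = (\<Sum>\<delta>\<in>{\<delta>. a w \<delta> \<noteq> 0}. if \<delta> = \<gamma> then (if v = w then a w \<delta> else 0) else 0)"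
      unfolding hecke_scal_def hecke_T_def by (rule sum.cong) auto
    then show ?thesis using assms that by (simp add: group_ring_elems_def)
  qed
  have "hecke_comb F a v \<gamma> = (\<Sum>w\<in>F. if v = w then a v \<gamma> else 0)"
    unfolding hecke_comb_def by (rule sum.cong) (auto simp: scal_T)
  then show ?thesis using assms(1) by simp
qed

lemma rel_trace_add:
  "rel_trace W G K (\<lambda>v \<gamma>. f v \<gamma> + g v \<gamma>) v \<gamma> = rel_trace W G K f v \<gamma> + rel_trace W G K g v \<gamma>"
  by (cases "v \<in> carrier W") (simp_all add: rel_trace_def hecke_act_def sum.distrib)

lemma rel_trace_zero: "rel_trace W G K (\<lambda>v \<gamma>. 0) v \<gamma> = 0"
  by (simp add: rel_trace_def hecke_act_def)

lemma trace_ideal_add: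
  assumes "x \<in> trace_ideal W G" "y \<in> trace_ideal W G"
  shows "(\<lambda>v \<gamma>. x v \<gamma> + y v \<gamma>) \<in> trace_ideal W G"
proof -
  obtain hs where hs: "\<forall>K\<in>proper_subgroups W G. hs K \<in> hecke_fixed W K"
    "x = (\<lambda>v \<gamma>. \<Sum>K\<in>proper_subgroups W G. rel_trace W G K (hs K) v \<gamma>)"
    using assms(1) unfolding trace_ideal_def by blast
  obtain ks where ks: "\<forall>K\<in>proper_subgroups W G. ks K \<in> hecke_fixed W K"
    "y = (\<lambda>v \<gamma>. \<Sum>K\<in>proper_subgroups W G. rel_trace W G K (ks K) v \<gamma>)"
    using assms(2) unfolding trace_ideal_def by blast
  have fixed: "\<forall>K\<in>proper_subgroups W G. (\<lambda>v \<gamma>. hs K v \<gamma> + ks K v \<gamma>) \<in> hecke_fixed W K"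
    using hs(1) ks(1) by (auto intro: hecke_fixed_combine[where F="(+)", simplified])
  have sum: "(\<lambda>v \<gamma>. x v \<gamma> + y v \<gamma>) = (\<lambda>v \<gamma>. \<Sum>K\<in>proper_subgroups W G.
      rel_trace W G K (\<lambda>v \<gamma>. hs K v \<gamma> + ks K v \<gamma>) v \<gamma>)"
    unfolding hs(2) ks(2) rel_trace_add sum.distrib ..
  show ?thesis
    unfolding trace_ideal_def
    by (rule CollectI, rule exI[of _ "\<lambda>K v \<gamma>. hs K v \<gamma> + ks K v \<gamma>"], rule conjI[OF fixed sum])
qed

lemma zero_in_trace_ideal: "(\<lambda>v \<gamma>. 0) \<in> trace_ideal W G"
  unfolding trace_ideal_def
  by (rule CollectI, rule exI[of _ "\<lambda>K v \<gamma>. 0"]) (simp add: zero_in_hecke_fixed rel_trace_zero)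

definition hecke_orbit_sum ::
  "('w \<Rightarrow> 'w) set \<Rightarrow> 'w \<Rightarrow> 'g \<Rightarrow> int \<Rightarrow> 'w \<Rightarrow> 'g \<Rightarrow> int" where
  "hecke_orbit_sum G w \<gamma> c = (\<lambda>v \<delta>. if (\<exists>\<tau>\<in>G. v = \<tau> w) \<and> \<delta> = \<gamma> then c else 0)"

locale finite_automorphism_group =
  fixes W :: "('w, 'b) monoid_scheme" and G :: "('w \<Rightarrow> 'w) set"
  assumes group_W: "group W"
    and subgroup_G: "subgroup G (AutoGroup W)"
    and finite_G: "finite G"

sublocale finite_automorphism_group \<subseteq> Aut: group "AutoGroup W"
  by (rule group.AutoGroup[OF group_W])

context finite_automorphism_group
begin

lemma mem_AutoGroup: "\<sigma> \<in> G \<Longrightarrow> \<sigma> \<in> carrier (AutoGroup W)"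
  by (rule subgroup.mem_carrier[OF subgroup_G])

lemma apply_in_carrier: "\<sigma> \<in> G \<Longrightarrow> u \<in> carrier W \<Longrightarrow> \<sigma> u \<in> carrier W"
  using AutoGroup_bij_betw[OF mem_AutoGroup] bij_betwE by blast

lemma apply_inv_apply: "\<sigma> \<in> G \<Longrightarrow> u \<in> carrier W \<Longrightarrow> (inv\<^bsub>AutoGroup W\<^esub> \<sigma>) (\<sigma> u) = u"
  by (rule AutoGroup_inv_apply[OF group_W mem_AutoGroup])

lemma apply_in_fixed_elems_iff:
  assumes \<sigma>: "\<sigma> \<in> G" and u: "u \<in> carrier W"
  shows "\<sigma> u \<in> fixed_elems W G \<longleftrightarrow> u \<in> fixed_elems W G"
proof
  assume fixed: "\<sigma> u \<in> fixed_elems W G"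
  have "inv\<^bsub>AutoGroup W\<^esub> \<sigma> \<in> G" using \<sigma> by (rule subgroup.m_inv_closed[OF subgroup_G])
  then have "u = \<sigma> u" using fixed apply_inv_apply[OF \<sigma> u] by (auto simp: fixed_elems_def)
  then show "u \<in> fixed_elems W G" using fixed by simp
next
  assume "u \<in> fixed_elems W G"
  moreover from this have "\<sigma> u = u" using \<sigma> by (simp add: fixed_elems_def)
  ultimately show "\<sigma> u \<in> fixed_elems W G" by simp
qed

lemma finite_proper_subgroups: "finite (proper_subgroups W G)"
  by (rule finite_subset[of _ "Pow G"]) (use finite_G in \<open>auto simp: proper_subgroups_def\<close>)

lemma some_left_coset_reps:
  assumes "K \<in> proper_subgroups W G"
  shows "(SOME R. R \<in> left_coset_reps W G K) \<in> left_coset_reps W G K"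
proof -
  have "subgroup K (AutoGroup W)" "K \<subseteq> G" using assms by (auto simp: proper_subgroups_def)
  then obtain R where "R \<subseteq> G \<and> (\<forall>\<tau>\<in>G. \<exists>!\<sigma>. \<sigma> \<in> R \<and> \<tau> \<in> \<sigma> <#\<^bsub>AutoGroup W\<^esub> K)"
    by (elim Aut.left_coset_reps_exist[OF subgroup_G, THEN exE])
  then have "R \<in> left_coset_reps W G K" unfolding left_coset_reps_def by (rule CollectI)
  then show ?thesis by (rule someI)
qed

lemma rel_trace_in_trace_ideal:
  assumes K: "K \<in> proper_subgroups W G" and h: "h \<in> hecke_fixed W K"
  shows "rel_trace W G K h \<in> trace_ideal W G"
proof -
  define hs where "hs K' = (if K' = K then h else (\<lambda>v \<gamma>. 0))" for K'
  have "\<forall>K'\<in>proper_subgroups W G. hs K' \<in> hecke_fixed W K'"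
    by (simp add: hs_def h zero_in_hecke_fixed)
  moreover have "rel_trace W G K h = (\<lambda>v \<gamma>. \<Sum>K'\<in>proper_subgroups W G. rel_trace W G K' (hs K') v \<gamma>)"
  proof (intro ext)
    fix v \<gamma>
    have "(\<Sum>K'\<in>proper_subgroups W G. rel_trace W G K' (hs K') v \<gamma>)
        = (\<Sum>K'\<in>proper_subgroups W G. if K' = K then rel_trace W G K h v \<gamma> else 0)"
      by (rule sum.cong) (simp_all add: hs_def rel_trace_zero)
    then show "rel_trace W G K h v \<gamma> = (\<Sum>K'\<in>proper_subgroups W G. rel_trace W G K' (hs K') v \<gamma>)"
      using finite_proper_subgroups K by simp
  qed
  ultimately show ?thesis unfolding trace_ideal_def by blast
qed

subsection \<open>Coefficients of traces at fixed points\<close>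

lemma prime_dvd_card_left_coset_reps:
  assumes p: "Factorial_Ring.prime p" and card_G: "card G = p ^ n"
    and K: "K \<in> proper_subgroups W G" and R: "R \<in> left_coset_reps W G K"
  shows "p dvd card R"
proof -
  have K': "subgroup K (AutoGroup W)" "K \<subset> G" using K by (auto simp: proper_subgroups_def)
  have "card G = card R * card K"
    using R Aut.card_eq_card_left_coset_reps_mult[OF subgroup_G K'(1) _ finite_G] K'(2)
    by (auto simp: left_coset_reps_def)
  moreover have "card K < card G" by (rule psubset_card_mono[OF finite_G K'(2)])
  ultimately have "card R \<noteq> 1" "card R dvd p ^ n" by (auto simp: card_G)
  then obtain m where "normalize (card R) = p ^ m"
    using divides_primepow[OF p] by blast
  then have "card R = p ^ m" by simp
  with \<open>card R \<noteq> 1\<close> have "m \<noteq> 0" by auto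
  then show ?thesis using \<open>card R = p ^ m\<close> by (simp add: dvd_power)
qed

lemma rel_trace_at_fixed_elem:
  assumes K: "K \<in> proper_subgroups W G" and w: "w \<in> fixed_elems W G"
  shows "rel_trace W G K h w \<gamma> = int (card (SOME R. R \<in> left_coset_reps W G K)) * h w \<gamma>"
proof -
  have "hecke_act W \<sigma> h w \<gamma> = h w \<gamma>" if "\<sigma> \<in> G" for \<sigma>
  proof -
    have "\<sigma> w = w" using that w by (simp add: fixed_elems_def)
    then show ?thesis using hecke_act_apply[OF mem_AutoGroup[OF that], of w h] w
      by (simp add: fixed_elems_def)
  qed
  moreover have "(SOME R. R \<in> left_coset_reps W G K) \<subseteq> G"
    using some_left_coset_reps[OF K] by (simp add: left_coset_reps_def)
  ultimately show ?thesis unfolding rel_trace_def by (simp add: subset_iff)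
qed

lemma trace_ideal_prime_dvd_at_fixed_elem:
  assumes "Factorial_Ring.prime p" "card G = p ^ n"
    and x: "x \<in> trace_ideal W G" and w: "w \<in> fixed_elems W G"
  shows "int p dvd x w \<gamma>"
proof -
  obtain hs where x_eq: "x = (\<lambda>v \<gamma>. \<Sum>K\<in>proper_subgroups W G. rel_trace W G K (hs K) v \<gamma>)"
    using x unfolding trace_ideal_def by blast
  have "int p dvd rel_trace W G K (hs K) w \<gamma>" if "K \<in> proper_subgroups W G" for K
    using prime_dvd_card_left_coset_reps[OF assms(1,2) that some_left_coset_reps[OF that]]
    by (simp add: rel_trace_at_fixed_elem[OF that w])
  then show ?thesis unfolding x_eq by (simp add: dvd_sum)
qed

subsection \<open>Orbit sums lie in the trace ideal\<close>

lemma stabilizer_in_proper_subgroups: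
  assumes w: "w \<in> carrier W" and moved: "\<exists>\<sigma>\<in>G. \<sigma> w \<noteq> w"
  shows "{\<sigma>\<in>G. \<sigma> w = w} \<in> proper_subgroups W G"
proof -
  have "subgroup {\<sigma>\<in>G. \<sigma> w = w} (AutoGroup W)"
  proof (rule Aut.subgroupI)
    show "{\<sigma>\<in>G. \<sigma> w = w} \<subseteq> carrier (AutoGroup W)" using mem_AutoGroup by blast
    show "{\<sigma>\<in>G. \<sigma> w = w} \<noteq> {}"
      using subgroup.one_closed[OF subgroup_G] AutoGroup_one_apply[OF w] by blast
    show "inv\<^bsub>AutoGroup W\<^esub> \<sigma> \<in> {\<sigma>\<in>G. \<sigma> w = w}" if "\<sigma> \<in> {\<sigma>\<in>G. \<sigma> w = w}" for \<sigma>
      using that apply_inv_apply[of \<sigma> w] w subgroup.m_inv_closed[OF subgroup_G] by auto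
    show "\<sigma> \<otimes>\<^bsub>AutoGroup W\<^esub> \<tau> \<in> {\<sigma>\<in>G. \<sigma> w = w}"
      if "\<sigma> \<in> {\<sigma>\<in>G. \<sigma> w = w}" "\<tau> \<in> {\<sigma>\<in>G. \<sigma> w = w}" for \<sigma> \<tau>
      using that AutoGroup_mult_apply[OF mem_AutoGroup mem_AutoGroup w]
        subgroup.m_closed[OF subgroup_G] by auto
  qed
  moreover have "{\<sigma>\<in>G. \<sigma> w = w} \<subset> G" using moved by auto
  ultimately show ?thesis by (simp add: proper_subgroups_def)
qed

lemma in_l_coset_stabilizer_iff:
  assumes w: "w \<in> carrier W" and \<sigma>: "\<sigma> \<in> G" and \<tau>: "\<tau> \<in> G"
  shows "\<tau> \<in> \<sigma> <#\<^bsub>AutoGroup W\<^esub> {\<kappa>\<in>G. \<kappa> w = w} \<longleftrightarrow> \<sigma> w = \<tau> w"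
proof
  assume "\<tau> \<in> \<sigma> <#\<^bsub>AutoGroup W\<^esub> {\<kappa>\<in>G. \<kappa> w = w}"
  then obtain \<kappa> where "\<kappa> \<in> G" "\<kappa> w = w" "\<tau> = \<sigma> \<otimes>\<^bsub>AutoGroup W\<^esub> \<kappa>"
    unfolding l_coset_def by blast
  then show "\<sigma> w = \<tau> w" using AutoGroup_mult_apply[OF mem_AutoGroup[OF \<sigma>] mem_AutoGroup w] by simp
next
  assume same: "\<sigma> w = \<tau> w"
  define \<kappa> where "\<kappa> = inv\<^bsub>AutoGroup W\<^esub> \<sigma> \<otimes>\<^bsub>AutoGroup W\<^esub> \<tau>"
  have \<kappa>_G: "\<kappa> \<in> G"
    unfolding \<kappa>_def using \<sigma> \<tau> subgroup_G by (simp add: subgroup.m_closed subgroup.m_inv_closed)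
  have "\<kappa> w = (inv\<^bsub>AutoGroup W\<^esub> \<sigma>) (\<sigma> w)"
    unfolding \<kappa>_def same
    by (rule AutoGroup_mult_apply[OF Aut.inv_closed[OF mem_AutoGroup[OF \<sigma>]] mem_AutoGroup[OF \<tau>] w])
  then have "\<kappa> w = w" using apply_inv_apply[OF \<sigma> w] by simp
  moreover have "\<tau> = \<sigma> \<otimes>\<^bsub>AutoGroup W\<^esub> \<kappa>"
    unfolding \<kappa>_def using mem_AutoGroup[OF \<sigma>] mem_AutoGroup[OF \<tau>] by (simp add: Aut.m_assoc[symmetric])
  ultimately show "\<tau> \<in> \<sigma> <#\<^bsub>AutoGroup W\<^esub> {\<kappa>\<in>G. \<kappa> w = w}"
    using \<kappa>_G unfolding l_coset_def by blast
qed

lemma apply_in_orbit_iff: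
  assumes \<sigma>: "\<sigma> \<in> G" and u: "u \<in> carrier W" and w: "w \<in> carrier W"
  shows "(\<exists>\<tau>\<in>G. \<sigma> u = \<tau> w) \<longleftrightarrow> (\<exists>\<tau>\<in>G. u = \<tau> w)"
proof
  assume "\<exists>\<tau>\<in>G. \<sigma> u = \<tau> w"
  then obtain \<tau> where \<tau>: "\<tau> \<in> G" "\<sigma> u = \<tau> w" by blast
  have \<sigma>': "inv\<^bsub>AutoGroup W\<^esub> \<sigma> \<in> G" using \<sigma> by (rule subgroup.m_inv_closed[OF subgroup_G])
  have "u = (inv\<^bsub>AutoGroup W\<^esub> \<sigma> \<otimes>\<^bsub>AutoGroup W\<^esub> \<tau>) w"
    using apply_inv_apply[OF \<sigma> u] AutoGroup_mult_apply[OF mem_AutoGroup[OF \<sigma>'] mem_AutoGroup[OF \<tau>(1)] w]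
    by (simp add: \<tau>(2))
  then show "\<exists>\<tau>\<in>G. u = \<tau> w" using subgroup.m_closed[OF subgroup_G \<sigma>' \<tau>(1)] by blast
next
  assume "\<exists>\<tau>\<in>G. u = \<tau> w"
  then obtain \<tau> where \<tau>: "\<tau> \<in> G" "u = \<tau> w" by blast
  then have "\<sigma> u = (\<sigma> \<otimes>\<^bsub>AutoGroup W\<^esub> \<tau>) w"
    using AutoGroup_mult_apply[OF mem_AutoGroup[OF \<sigma>] mem_AutoGroup[OF \<tau>(1)] w] by simp
  then show "\<exists>\<tau>\<in>G. \<sigma> u = \<tau> w" using subgroup.m_closed[OF subgroup_G \<sigma> \<tau>(1)] by blast
qed

lemma hecke_orbit_sum_in_hecke_fixed:
  assumes w: "w \<in> carrier W"
  shows "hecke_orbit_sum G w \<gamma> c \<in> hecke_fixed W G"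
proof -
  let ?T = "hecke_orbit_sum G w \<gamma> c"
  have "{(v, \<delta>). ?T v \<delta> \<noteq> 0} \<subseteq> (\<lambda>\<tau>. (\<tau> w, \<gamma>)) ` G"
    by (auto simp: hecke_orbit_sum_def split: if_splits)
  then have T_elems: "?T \<in> hecke_elems W"
    using finite_G apply_in_carrier[OF _ w]
    by (auto simp: hecke_elems_def hecke_orbit_sum_def intro: finite_subset)
  have "?T (\<sigma> u) = ?T u" if "\<sigma> \<in> G" "u \<in> carrier W" for \<sigma> u
    using apply_in_orbit_iff[OF that w] by (simp add: hecke_orbit_sum_def)
  then show ?thesis
    using T_elems hecke_act_fixed_iff[OF T_elems mem_AutoGroup] by (simp add: hecke_fixed_def)
qed

lemma single_term_in_hecke_fixed_stabilizer:
  assumes w: "w \<in> carrier W"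
  shows "(\<lambda>v \<delta>. if v = w \<and> \<delta> = \<gamma> then c else 0) \<in> hecke_fixed W {\<sigma>\<in>G. \<sigma> w = w}"
proof -
  let ?h = "\<lambda>v \<delta>. if v = w \<and> \<delta> = \<gamma> then c else (0::int)"
  have "{(v, \<delta>). ?h v \<delta> \<noteq> 0} \<subseteq> {(w, \<gamma>)}" by auto
  then have h_elems: "?h \<in> hecke_elems W"
    using w unfolding hecke_elems_def by (auto intro: finite_subset)
  have "?h (\<sigma> u) = ?h u" if \<sigma>: "\<sigma> \<in> G" "\<sigma> w = w" and u: "u \<in> carrier W" for \<sigma> u
  proof -
    have "\<sigma> u = \<sigma> w \<longleftrightarrow> u = w"
      by (rule inj_on_eq_iff[OF bij_betw_imp_inj_on[OF AutoGroup_bij_betw[OF mem_AutoGroup[OF \<sigma>(1)]]] u w])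
    then show ?thesis using \<sigma>(2) by simp
  qed
  then show ?thesis
    using h_elems hecke_act_fixed_iff[OF h_elems mem_AutoGroup] by (simp add: hecke_fixed_def)
qed

lemma hecke_act_single_term:
  assumes \<sigma>: "\<sigma> \<in> G" and w: "w \<in> carrier W"
  shows "hecke_act W \<sigma> (\<lambda>v \<delta>. if v = w \<and> \<delta> = \<gamma> then c else 0) v \<delta>
       = (if v \<in> carrier W \<and> \<sigma> w = v \<and> \<delta> = \<gamma> then c else 0)"
proof (cases "v \<in> carrier W")
  case True
  have b: "bij_betw \<sigma> (carrier W) (carrier W)" by (rule AutoGroup_bij_betw[OF mem_AutoGroup[OF \<sigma>]])
  have "inv_into (carrier W) \<sigma> v = w \<longleftrightarrow> \<sigma> w = v"
    using bij_betw_inv_into_right[OF b True] bij_betw_inv_into_left[OF b w] by auto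
  then show ?thesis using True by (auto simp: hecke_act_def)
qed (simp add: hecke_act_def)

lemma rel_trace_stabilizer_single_term:
  assumes w: "w \<in> carrier W" and moved: "\<exists>\<sigma>\<in>G. \<sigma> w \<noteq> w"
  shows "rel_trace W G {\<sigma>\<in>G. \<sigma> w = w} (\<lambda>v \<delta>. if v = w \<and> \<delta> = \<gamma> then c else 0)
       = hecke_orbit_sum G w \<gamma> c"
proof (intro ext)
  fix v \<delta>
  define K where "K = {\<sigma>\<in>G. \<sigma> w = w}"
  define R where "R = (SOME R. R \<in> left_coset_reps W G K)"
  have R: "R \<subseteq> G" "\<forall>\<tau>\<in>G. \<exists>!\<sigma>. \<sigma> \<in> R \<and> \<tau> \<in> \<sigma> <#\<^bsub>AutoGroup W\<^esub> K"
    using some_left_coset_reps[OF stabilizer_in_proper_subgroups[OF w moved]]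
    unfolding R_def K_def left_coset_reps_def by auto
  have "rel_trace W G K (\<lambda>v \<delta>. if v = w \<and> \<delta> = \<gamma> then c else 0) v \<delta>
      = (\<Sum>\<sigma>\<in>R. if v \<in> carrier W \<and> \<sigma> w = v \<and> \<delta> = \<gamma> then c else 0)"
    unfolding rel_trace_def R_def[symmetric] using R(1)
    by (intro sum.cong) (auto simp: hecke_act_single_term[OF _ w])
  also have "\<dots> = hecke_orbit_sum G w \<gamma> c v \<delta>"
  proof (cases "(\<exists>\<tau>\<in>G. v = \<tau> w) \<and> \<delta> = \<gamma>")
    case True
    then obtain \<tau> where \<tau>: "\<tau> \<in> G" "v = \<tau> w" "\<delta> = \<gamma>" by blast
    obtain \<sigma>\<^sub>0 where \<sigma>\<^sub>0: "\<sigma>\<^sub>0 \<in> R" "\<tau> \<in> \<sigma>\<^sub>0 <#\<^bsub>AutoGroup W\<^esub> K"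
      and unique: "\<And>\<sigma>. \<sigma> \<in> R \<Longrightarrow> \<tau> \<in> \<sigma> <#\<^bsub>AutoGroup W\<^esub> K \<Longrightarrow> \<sigma> = \<sigma>\<^sub>0"
      using bspec[OF R(2) \<tau>(1)] by (elim ex1E) blast
    have "\<sigma> w = v \<longleftrightarrow> \<sigma> = \<sigma>\<^sub>0" if "\<sigma> \<in> R" for \<sigma>
      using in_l_coset_stabilizer_iff[OF w _ \<tau>(1)] that \<sigma>\<^sub>0 unique R(1) \<tau>(2)
      unfolding K_def by blast
    moreover have "v \<in> carrier W" using apply_in_carrier[OF \<tau>(1) w] \<tau>(2) by simp
    ultimately have "(\<Sum>\<sigma>\<in>R. if v \<in> carrier W \<and> \<sigma> w = v \<and> \<delta> = \<gamma> then c else 0)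
        = (\<Sum>\<sigma>\<in>R. if \<sigma> = \<sigma>\<^sub>0 then c else 0)"
      using \<tau>(3) by (intro sum.cong) auto
    also have "\<dots> = c" using finite_subset[OF R(1) finite_G] \<sigma>\<^sub>0(1) by simp
    finally show ?thesis using True by (simp add: hecke_orbit_sum_def)
  next
    case False
    then have "(\<Sum>\<sigma>\<in>R. if v \<in> carrier W \<and> \<sigma> w = v \<and> \<delta> = \<gamma> then c else 0) = (\<Sum>\<sigma>\<in>R. 0)"
      using R(1) by (intro sum.cong) auto
    then show ?thesis using False by (auto simp: hecke_orbit_sum_def)
  qed
  finally show "rel_trace W G K (\<lambda>v \<delta>. if v = w \<and> \<delta> = \<gamma> then c else 0) v \<delta>
      = hecke_orbit_sum G w \<gamma> c v \<delta>" .
qed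

lemma hecke_orbit_sum_in_trace_ideal:
  assumes "w \<in> carrier W" "\<exists>\<sigma>\<in>G. \<sigma> w \<noteq> w"
  shows "hecke_orbit_sum G w \<gamma> c \<in> trace_ideal W G"
  using rel_trace_in_trace_ideal[OF stabilizer_in_proper_subgroups[OF assms]
      single_term_in_hecke_fixed_stabilizer[OF assms(1)]]
  by (simp add: rel_trace_stabilizer_single_term[OF assms])

lemma support_diff_hecke_orbit_sum:
  assumes y: "y \<in> hecke_fixed W G" and w: "w \<in> carrier W" and nonzero: "y w \<gamma> \<noteq> 0"
  shows "{(v, \<delta>). y v \<delta> - hecke_orbit_sum G w \<gamma> (y w \<gamma>) v \<delta> \<noteq> 0} \<subset> {(v, \<delta>). y v \<delta> \<noteq> 0}"
proof -
  have "y (\<tau> w) \<gamma> = y w \<gamma>" if "\<tau> \<in> G" for \<tau>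
    using hecke_fixed_apply[OF y that mem_AutoGroup[OF that] w] by simp
  then have "y v \<delta> - hecke_orbit_sum G w \<gamma> (y w \<gamma>) v \<delta> \<noteq> 0 \<Longrightarrow> y v \<delta> \<noteq> 0" for v \<delta>
    by (auto simp: hecke_orbit_sum_def split: if_splits)
  moreover have "\<exists>\<tau>\<in>G. w = \<tau> w"
    using subgroup.one_closed[OF subgroup_G] AutoGroup_one_apply[OF w] by (intro bexI) simp_all
  then have "(w, \<gamma>) \<notin> {(v, \<delta>). y v \<delta> - hecke_orbit_sum G w \<gamma> (y w \<gamma>) v \<delta> \<noteq> 0}"
    by (simp add: hecke_orbit_sum_def)
  ultimately show ?thesis using nonzero by blast
qed

lemma hecke_fixed_vanishing_on_fixed_elems_in_trace_ideal:
  assumes "y \<in> hecke_fixed W G" and "\<forall>v\<in>fixed_elems W G. \<forall>\<delta>. y v \<delta> = 0"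
  shows "y \<in> trace_ideal W G"
  using assms
proof (induction y rule: measure_induct_rule[where f="\<lambda>y. card {(v, \<delta>). y v \<delta> \<noteq> 0}"])
  case (less y)
  show ?case
  proof (cases "\<forall>v \<delta>. y v \<delta> = 0")
    case True
    then have "y = (\<lambda>v \<delta>. 0)" by (simp add: fun_eq_iff)
    then show ?thesis by (simp add: zero_in_trace_ideal)
  next
    case False
    then obtain w \<gamma> where nonzero: "y w \<gamma> \<noteq> 0" by blast
    have w: "w \<in> carrier W"
      using less.prems(1) nonzero by (auto simp: hecke_fixed_def hecke_elems_def)
    have "w \<notin> fixed_elems W G" using less.prems(2) nonzero by blast
    then have moved: "\<exists>\<sigma>\<in>G. \<sigma> w \<noteq> w" using w by (simp add: fixed_elems_def)
    define T where "T = hecke_orbit_sum G w \<gamma> (y w \<gamma>)"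
    define y' where "y' = (\<lambda>v \<delta>. y v \<delta> - T v \<delta>)"
    have T_fixed: "T \<in> hecke_fixed W G"
      unfolding T_def by (rule hecke_orbit_sum_in_hecke_fixed[OF w])
    have y'_fixed: "y' \<in> hecke_fixed W G"
      unfolding y'_def by (rule hecke_fixed_combine[where F="(-)", OF _ less.prems(1) T_fixed]) simp
    have "T v \<delta> = 0" if "v \<in> fixed_elems W G" for v \<delta>
    proof -
      have "v \<noteq> \<tau> w" if "\<tau> \<in> G" for \<tau>
        using apply_in_fixed_elems_iff[OF that w] \<open>w \<notin> fixed_elems W G\<close> \<open>v \<in> fixed_elems W G\<close>
        by auto
      then show ?thesis by (auto simp: T_def hecke_orbit_sum_def)
    qed
    then have y'_vanishes: "\<forall>v\<in>fixed_elems W G. \<forall>\<delta>. y' v \<delta> = 0"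
      using less.prems(2) by (simp add: y'_def)
    have "finite {(v, \<delta>). y v \<delta> \<noteq> 0}"
      using less.prems(1) by (simp add: hecke_fixed_def hecke_elems_def)
    then have smaller: "card {(v, \<delta>). y' v \<delta> \<noteq> 0} < card {(v, \<delta>). y v \<delta> \<noteq> 0}"
      using support_diff_hecke_orbit_sum[OF less.prems(1) w nonzero]
      unfolding y'_def T_def by (rule psubset_card_mono)
    have "y' \<in> trace_ideal W G" by (rule less.IH[OF smaller y'_fixed y'_vanishes])
    moreover have "T \<in> trace_ideal W G"
      unfolding T_def by (rule hecke_orbit_sum_in_trace_ideal[OF w moved])
    ultimately have "(\<lambda>v \<delta>. y' v \<delta> + T v \<delta>) \<in> trace_ideal W G" by (rule trace_ideal_add)
    then show ?thesis by (simp add: y'_def)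
  qed
qed

lemma hecke_fixed_congruent_hecke_comb:
  assumes x: "x \<in> hecke_fixed W G"
  shows "\<exists>F a. finite F \<and> F \<subseteq> fixed_elems W G \<and> (\<forall>w\<in>F. a w \<in> group_ring_elems) \<and>
           (\<lambda>v \<gamma>. x v \<gamma> - hecke_comb F a v \<gamma>) \<in> trace_ideal W G"
proof -
  have supp_x: "finite {(v, \<gamma>). x v \<gamma> \<noteq> 0}" using x by (simp add: hecke_fixed_def hecke_elems_def)
  define F where "F = {w \<in> fixed_elems W G. \<exists>\<gamma>. x w \<gamma> \<noteq> 0}"
  have "F \<subseteq> fst ` {(v, \<gamma>). x v \<gamma> \<noteq> 0}" unfolding F_def by (auto simp: image_iff)
  then have F: "finite F" using supp_x by (rule finite_subset[OF _ finite_imageI])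
  have coeffs: "\<forall>w\<in>F. x w \<in> group_ring_elems"
  proof
    fix w
    have "{\<gamma>. x w \<gamma> \<noteq> 0} \<subseteq> snd ` {(v, \<gamma>). x v \<gamma> \<noteq> 0}" by (auto simp: image_iff)
    then show "x w \<in> group_ring_elems"
      unfolding group_ring_elems_def using supp_x by (auto intro: finite_subset)
  qed
  define y where "y = (\<lambda>v \<gamma>. if v \<in> fixed_elems W G then 0 else x v \<gamma>)"
  have y_eq: "(\<lambda>v \<gamma>. x v \<gamma> - hecke_comb F x v \<gamma>) = y"
    unfolding hecke_comb_apply[OF F coeffs] by (auto simp: fun_eq_iff y_def F_def)
  have "{(v, \<gamma>). y v \<gamma> \<noteq> 0} \<subseteq> {(v, \<gamma>). x v \<gamma> \<noteq> 0}" by (auto simp: y_def)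
  then have "finite {(v, \<gamma>). y v \<gamma> \<noteq> 0}" using supp_x by (rule finite_subset)
  moreover have "x v \<gamma> = 0" if "v \<notin> carrier W" for v \<gamma>
    using x that by (simp add: hecke_fixed_def hecke_elems_def)
  ultimately have y_elems: "y \<in> hecke_elems W"
    by (simp add: hecke_elems_def y_def fun_eq_iff)
  have "y (\<sigma> u) = y u" if \<sigma>: "\<sigma> \<in> G" and u: "u \<in> carrier W" for \<sigma> u
    unfolding y_def
    by (simp only: hecke_fixed_apply[OF x \<sigma> mem_AutoGroup[OF \<sigma>] u] apply_in_fixed_elems_iff[OF \<sigma> u])
  then have "y \<in> hecke_fixed W G"
    using y_elems hecke_act_fixed_iff[OF y_elems mem_AutoGroup] by (simp add: hecke_fixed_def)
  then have "y \<in> trace_ideal W G"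
    by (rule hecke_fixed_vanishing_on_fixed_elems_in_trace_ideal) (simp add: y_def)
  then have "(\<lambda>v \<gamma>. x v \<gamma> - hecke_comb F x v \<gamma>) \<in> trace_ideal W G" by (simp only: y_eq)
  moreover have "F \<subseteq> fixed_elems W G" by (simp add: F_def)
  ultimately show ?thesis using F coeffs by (intro exI[of _ F] exI[of _ x] conjI)
qed

lemma hecke_comb_in_trace_ideal_imp_coeffs_dvd:
  assumes "Factorial_Ring.prime p" "card G = p ^ n"
    and F: "finite F" "F \<subseteq> fixed_elems W G" "\<forall>w\<in>F. a w \<in> group_ring_elems"
    and trace: "hecke_comb F a \<in> trace_ideal W G" and w: "w \<in> F"
  shows "int p dvd a w \<gamma>"
  using trace_ideal_prime_dvd_at_fixed_elem[OF assms(1,2) trace, of w \<gamma>] F w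
  by (simp add: hecke_comb_apply[OF F(1,3)] subsetD)

end

theorem corollary2p3:
  fixes W :: "'w monoid" and S :: "'w set" and \<phi> :: "'w \<Rightarrow> 'g::linordered_ab_group_add"
    and p :: nat and G :: "('w \<Rightarrow> 'w) set"
  assumes "coxeter_system W S" and "finite S"
    and "weight_function W S \<phi>"
    and "Factorial_Ring.prime p"
    and "subgroup G (AutoGroup W)" and "finite G" and "\<exists>n. card G = p ^ n"
    and "\<forall>\<sigma>\<in>G. \<sigma> ` S = S"
    and "\<forall>\<sigma>\<in>G. \<forall>w\<in>carrier W. \<phi> (\<sigma> w) = \<phi> w"
  shows "brauer_basis p W G TYPE('g)"
proof -
  interpret finite_automorphism_group W G
    using assms(1,5,6) by (intro finite_automorphism_group.intro) (simp_all add: coxeter_system_def)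
  obtain n where n: "card G = p ^ n" using assms(7) by blast
  show ?thesis
    unfolding brauer_basis_def
  proof (intro conjI ballI allI impI)
    fix x assume "x \<in> (hecke_fixed W G :: ('w \<Rightarrow> 'g \<Rightarrow> int) set)"
    then show "\<exists>F a. finite F \<and> F \<subseteq> fixed_elems W G \<and> (\<forall>w\<in>F. a w \<in> group_ring_elems) \<and>
        (\<lambda>v \<gamma>. x v \<gamma> - hecke_comb F a v \<gamma>) \<in> trace_ideal W G"
      by (rule hecke_fixed_congruent_hecke_comb)
  next
    fix F and a :: "'w \<Rightarrow> 'g \<Rightarrow> int" and w \<gamma>
    assume "finite F \<and> F \<subseteq> fixed_elems W G \<and> (\<forall>w\<in>F. a w \<in> group_ring_elems) \<and>
        hecke_comb F a \<in> trace_ideal W G" and "w \<in> F"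
    then show "int p dvd a w \<gamma>"
      using hecke_comb_in_trace_ideal_imp_coeffs_dvd[OF assms(4) n] by blast
  qed
qed

end
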